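(* Let $p$ be a prime, $K\in\{\mathbb Z_{(p)},\mathbb Z_p\}$, $F$ a field containing $K$, $G=\langle a\rangle\cong C_{p^2}$, $\Phi(x)=x^{p-1}+\dots+x+1$, and for $0\leq i\leq p-1$ let $Y_i$ be the $KC_{p^2}$-submodule of $KC_{p^2}$ generated by $\Phi(a)$ and $(a-1)^i$. Then for every $1$-cocycle $T:C_{p^2}\to\widehat{Y_i}$ the group $\mathrm{Crys}(C_{p^2};Y_i;T)$ contains an element of order $p$.
   Context: $FM=F\otimes_KM$, $\widehat M=FM/M$ with $g(x+M)=gx+M$; a $1$-cocycle is $T:G\to\widehat M$ with $T(gh)=gT(h)+T(g)$. $\mathrm{Crys}(G;M;T)=\{(g,x):g\in G,\ x\in FM,\ x+M=T(g)\}$ with $(g,x)(g',x')=(gg',g'x+x')$. *)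

theory Defs
  imports "HOL-Algebra.Multiplicative_Group" "HOL-Library.Function_Algebras" "HOL-Computational_Algebra.Primes"
begin

section \<open>The ring of p-adic integers as an inverse limit of Z/p^n\<close>

definition Zp_carrier :: "nat \<Rightarrow> (nat \<Rightarrow> int) set" where
  "Zp_carrier p = {x. (\<forall>n. 0 \<le> x n \<and> x n < int p ^ n) \<and>
                      (\<forall>n. x (Suc n) mod (int p ^ n) = x n)}"

definition Zp_add :: "nat \<Rightarrow> (nat \<Rightarrow> int) \<Rightarrow> (nat \<Rightarrow> int) \<Rightarrow> (nat \<Rightarrow> int)" where
  "Zp_add p x y = (\<lambda>n. (x n + y n) mod (int p ^ n))"

definition Zp_mult :: "nat \<Rightarrow> (nat \<Rightarrow> int) \<Rightarrow> (nat \<Rightarrow> int) \<Rightarrow> (nat \<Rightarrow> int)" where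
  "Zp_mult p x y = (\<lambda>n. (x n * y n) mod (int p ^ n))"

definition Zp_one :: "nat \<Rightarrow> (nat \<Rightarrow> int)" where
  "Zp_one p = (\<lambda>n. 1 mod (int p ^ n))"

definition Zloc :: "nat \<Rightarrow> rat set" where
  "Zloc p = {r. \<not> int p dvd snd (quotient_of r)}"

section \<open>K is (an isomorphic copy of) a given ring inside the field F\<close>

definition ring_copy_in ::
  "'r set \<Rightarrow> ('r \<Rightarrow> 'r \<Rightarrow> 'r) \<Rightarrow> ('r \<Rightarrow> 'r \<Rightarrow> 'r) \<Rightarrow> 'r \<Rightarrow> 'f::field set \<Rightarrow> bool" where
  "ring_copy_in R ad mu on K \<longleftrightarrow>
     (\<exists>\<phi>. inj_on \<phi> R \<and> \<phi> ` R = K \<and> \<phi> on = 1 \<and>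
          (\<forall>x\<in>R. \<forall>y\<in>R. \<phi> (ad x y) = \<phi> x + \<phi> y \<and> \<phi> (mu x y) = \<phi> x * \<phi> y))"

definition is_Zloc_in :: "nat \<Rightarrow> 'f::field set \<Rightarrow> bool" where
  "is_Zloc_in p K \<longleftrightarrow> ring_copy_in (Zloc p) (+) (*) 1 K"

definition is_Zp_in :: "nat \<Rightarrow> 'f::field set \<Rightarrow> bool" where
  "is_Zp_in p K \<longleftrightarrow> ring_copy_in (Zp_carrier p) (Zp_add p) (Zp_mult p) (Zp_one p) K"

text \<open>An element of F C_n is a coefficient function x :: nat => F supported on {0..<n};
  the coefficient x j belongs to the group element a^j.  Group elements of C_n are
  represented by exponents k < n.\<close>

definition gr_elems :: "nat \<Rightarrow> (nat \<Rightarrow> 'f::field) set" where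
  "gr_elems n = {x. \<forall>j\<ge>n. x j = 0}"

definition gr_act :: "nat \<Rightarrow> nat \<Rightarrow> (nat \<Rightarrow> 'f::field) \<Rightarrow> (nat \<Rightarrow> 'f)" where
  "gr_act n k x = (\<lambda>j. if j < n then x ((j + n - k mod n) mod n) else 0)"

definition gr_mult :: "nat \<Rightarrow> (nat \<Rightarrow> 'f::field) \<Rightarrow> (nat \<Rightarrow> 'f) \<Rightarrow> (nat \<Rightarrow> 'f)" where
  "gr_mult n x y = (\<lambda>j. if j < n then
      (\<Sum>u<n. \<Sum>v<n. if (u + v) mod n = j then x u * y v else 0) else 0)"

definition gr_basis :: "nat \<Rightarrow> nat \<Rightarrow> (nat \<Rightarrow> 'f::field)" where
  "gr_basis n k = (\<lambda>j. if j < n \<and> j = k mod n then 1 else 0)"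

definition gr_pow :: "nat \<Rightarrow> (nat \<Rightarrow> 'f::field) \<Rightarrow> nat \<Rightarrow> (nat \<Rightarrow> 'f)" where
  "gr_pow n x i = (gr_mult n x ^^ i) (gr_basis n 0)"

definition gr_smult :: "'f::field \<Rightarrow> (nat \<Rightarrow> 'f) \<Rightarrow> (nat \<Rightarrow> 'f)" where
  "gr_smult c x = (\<lambda>j. c * x j)"

definition KG :: "nat \<Rightarrow> 'f::field set \<Rightarrow> (nat \<Rightarrow> 'f) set" where
  "KG n K = {x \<in> gr_elems n. \<forall>j. x j \<in> K}"

definition PhiA :: "nat \<Rightarrow> (nat \<Rightarrow> 'f::field)" where
  "PhiA p = (\<Sum>j<p. gr_basis (p^2) j)"

definition Ymod :: "nat \<Rightarrow> 'f::field set \<Rightarrow> nat \<Rightarrow> (nat \<Rightarrow> 'f) set" where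
  "Ymod p K i = {gr_mult (p^2) u (PhiA p) +
                 gr_mult (p^2) v (gr_pow (p^2) (gr_basis (p^2) 1 - gr_basis (p^2) 0) i)
                 | u v. u \<in> KG (p^2) K \<and> v \<in> KG (p^2) K}"

text \<open>FM, realised as the F-span of M inside F C_n (the image of F \<otimes>_K M, which
  embeds since F is flat over the PID K)\<close>
definition Fspan :: "(nat \<Rightarrow> 'f::field) set \<Rightarrow> (nat \<Rightarrow> 'f) set" where
  "Fspan M = {x. \<exists>S c. finite S \<and> S \<subseteq> M \<and> x = (\<Sum>m\<in>S. gr_smult (c m) m)}"

definition coset :: "(nat \<Rightarrow> 'f::field) set \<Rightarrow> (nat \<Rightarrow> 'f) \<Rightarrow> (nat \<Rightarrow> 'f) set" where
  "coset M x = (\<lambda>m. x + m) ` M"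

definition Mhat :: "(nat \<Rightarrow> 'f::field) set \<Rightarrow> (nat \<Rightarrow> 'f) set set" where
  "Mhat M = {coset M x | x. x \<in> Fspan M}"

text \<open>1-cocycle T : C_n -> hat M with T(gh) = g T(h) + T(g); the action on cosets is
  g(x+M) = gx+M and the sum of cosets is the sum of sets.\<close>
definition is_cocycle :: "nat \<Rightarrow> (nat \<Rightarrow> 'f::field) set \<Rightarrow> (nat \<Rightarrow> (nat \<Rightarrow> 'f) set) \<Rightarrow> bool" where
  "is_cocycle n M T \<longleftrightarrow>
     (\<forall>g<n. T g \<in> Mhat M) \<and>
     (\<forall>g<n. \<forall>h<n. T ((g + h) mod n) = {gr_act n g y + z | y z. y \<in> T h \<and> z \<in> T g})"

definition Crys :: "nat \<Rightarrow> (nat \<Rightarrow> 'f::field) set \<Rightarrow> (nat \<Rightarrow> (nat \<Rightarrow> 'f) set)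
                     \<Rightarrow> (nat \<times> (nat \<Rightarrow> 'f)) monoid" where
  "Crys n M T = \<lparr> carrier = {(g, x). g < n \<and> x \<in> Fspan M \<and> coset M x = T g},
                  monoid.mult = (\<lambda>(g, x) (g', x'). ((g + g') mod n, gr_act n g' x + x')),
                  monoid.one = (0, 0) \<rparr>"

end

theory Submission
  imports Defs
begin

text \<open>Pick w in T(a). The cocycle identity shows that S_k = (1 + a + ... + a^(k-1)) w lies in
  T(a^k); in particular N w lies in T(1) = Y_i, where N is the norm element of C_(p^2). Since
  N w = c N with c the coefficient sum of w, c lies in K, so c Phi(a) lies in Y_i and
  x = S_p - c Phi(a) = Phi(a) (w - c) still represents T(a^p). The p-th power of (a^p, x) in
  Crys is (1, N (w - c)) = (1, 0), because the coefficients of w - c sum to zero; as a^p has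
  order p, so has (a^p, x). Only Phi(a) in Y_i is used, and the argument works for any
  cyclic group of order p q.\<close>

section \<open>The action of C_n on F C_n\<close>

lemma int_shifted_index:
  assumes "j < n"
  shows "int ((j + n - k mod n) mod n) = (int j - int k) mod int n"
proof -
  have "k mod n < n" using assms by simp
  then have "int (j + n - k mod n) = int j + int n - int k mod int n"
    by (simp add: zmod_int)
  also have "(\<dots>) mod int n = (int j - int k) mod int n"
    by (metis add.commute add_diff_eq mod_add_self1 mod_diff_right_eq)
  finally show ?thesis by (simp add: zmod_int)
qed

lemma shifted_index_eq_iff:
  assumes "(t::nat) < n"
  shows "(t + n - k mod n) mod n = j mod n \<longleftrightarrow> t = (j + k) mod n"
proof -
  have "(t + n - k mod n) mod n = j mod n \<longleftrightarrow> (int t - int k) mod int n = int j mod int n"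
    using int_shifted_index[OF assms] by (metis of_nat_eq_iff zmod_int)
  also have "\<dots> \<longleftrightarrow> int t mod int n = (int j + int k) mod int n"
    by (simp add: mod_eq_dvd_iff algebra_simps)
  also have "\<dots> \<longleftrightarrow> t = (j + k) mod n"
    using assms by (metis of_nat_eq_iff zmod_int of_nat_add mod_less)
  finally show ?thesis .
qed

lemma gr_act_mod: "gr_act n (k mod n) x = gr_act n k x"
  unfolding gr_act_def by (rule ext) simp

lemma gr_act_gr_act: "gr_act n g (gr_act n h x) = gr_act n (h + g) x"
proof (rule ext)
  fix j
  show "gr_act n g (gr_act n h x) j = gr_act n (h + g) x j"
  proof (cases "j < n")
    case True
    have "int (((j + n - g mod n) mod n + n - h mod n) mod n)
        = (int ((j + n - g mod n) mod n) - int h) mod int n"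
      using True by (simp add: int_shifted_index)
    also have "\<dots> = (int j - int (h + g)) mod int n"
      using True by (simp add: int_shifted_index mod_diff_left_eq algebra_simps)
    also have "\<dots> = int ((j + n - (h + g) mod n) mod n)"
      using True by (simp add: int_shifted_index)
    finally have "((j + n - g mod n) mod n + n - h mod n) mod n = (j + n - (h + g) mod n) mod n"
      by (simp only: of_nat_eq_iff)
    then show ?thesis using True by (simp add: gr_act_def)
  qed (simp add: gr_act_def)
qed

lemma gr_act_zero_left: "x \<in> gr_elems n \<Longrightarrow> gr_act n 0 x = x"
  by (rule ext) (auto simp: gr_act_def gr_elems_def)

lemma gr_act_add: "gr_act n k (x + y) = gr_act n k x + gr_act n k y"
  by (rule ext) (simp add: gr_act_def)

lemma gr_act_diff: "gr_act n k (x - y) = gr_act n k x - gr_act n k y"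
  by (rule ext) (simp add: gr_act_def)

lemma gr_act_uminus: "gr_act n k (- x) = - gr_act n k x"
  by (rule ext) (simp add: gr_act_def)

lemma gr_act_zero: "gr_act n k 0 = 0"
  by (rule ext) (simp add: gr_act_def)

lemma gr_act_smult: "gr_act n k (gr_smult c x) = gr_smult c (gr_act n k x)"
  by (rule ext) (simp add: gr_act_def gr_smult_def)

lemma sum_fun_apply: "(\<Sum>i\<in>A. f i) x = (\<Sum>i\<in>A. f i x)"
  by (induction A rule: infinite_finite_induct) auto

lemma gr_act_sum: "gr_act n k (\<Sum>i\<in>A. f i) = (\<Sum>i\<in>A. gr_act n k (f i))"
  by (rule ext) (simp add: gr_act_def sum_fun_apply)

lemma gr_act_basis: "gr_act n k (gr_basis n j) = gr_basis n (j + k)"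
  by (rule ext) (auto simp: gr_act_def gr_basis_def shifted_index_eq_iff)

definition gr_geom :: "nat \<Rightarrow> nat \<Rightarrow> (nat \<Rightarrow> 'f::field)" where
  "gr_geom n k = (\<Sum>j<k. gr_basis n j)"

lemma gr_geom_apply: "k \<le> n \<Longrightarrow> gr_geom n k j = (if j < k then 1 else 0)"
proof -
  assume "k \<le> n"
  then have "gr_geom n k j = (\<Sum>l<k. if j = l then 1 else 0)"
    unfolding gr_geom_def gr_basis_def sum_fun_apply by (intro sum.cong) auto
  then show ?thesis by simp
qed

lemma gr_geom_in_gr_elems: "gr_geom n k \<in> gr_elems n"
  by (simp add: gr_geom_def gr_basis_def gr_elems_def sum_fun_apply)

lemma gr_act_orbit_sum: "(\<Sum>t<n. gr_act n t z) = gr_smult (\<Sum>s<n. z s) (gr_geom n n)"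
proof (rule ext)
  fix j
  show "(\<Sum>t<n. gr_act n t z) j = gr_smult (\<Sum>s<n. z s) (gr_geom n n) j"
  proof (cases "j < n")
    case True
    have involution: "(j + n - (j + n - t) mod n) mod n = t" if "t < n" for t
    proof -
      have "int ((j + n - (j + n - t mod n) mod n mod n) mod n) = int t"
        using True that by (simp add: int_shifted_index mod_diff_right_eq)
      then show ?thesis using that by simp
    qed
    have "(\<Sum>t<n. gr_act n t z) j = (\<Sum>t<n. z ((j + n - t) mod n))"
      using True by (simp add: sum_fun_apply gr_act_def)
    also have "\<dots> = (\<Sum>s<n. z s)"
      by (rule sum.reindex_bij_witness[where i="\<lambda>s. (j + n - s) mod n" and j="\<lambda>s. (j + n - s) mod n"])
        (use True in \<open>auto simp: involution\<close>)
    finally show ?thesis using True by (simp add: gr_smult_def gr_geom_apply)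
  qed (simp add: sum_fun_apply gr_act_def gr_smult_def gr_geom_def gr_basis_def)
qed

lemma gr_act_sum_blocks:
  "(\<Sum>j<q. gr_act (p * q) (j * p) (\<Sum>l<p. gr_act (p * q) l z)) = (\<Sum>t<p * q. gr_act (p * q) t z)"
proof -
  have "(\<Sum>j<q. gr_act (p * q) (j * p) (\<Sum>l<p. gr_act (p * q) l z))
      = (\<Sum>j<q. \<Sum>l<p. gr_act (p * q) (l + j * p) z)"
    by (simp add: gr_act_sum gr_act_gr_act)
  also have "\<dots> = (\<Sum>j<q. \<Sum>t\<in>{j * p..<j * p + p}. gr_act (p * q) t z)"
  proof (rule sum.cong[OF refl])
    fix j
    show "(\<Sum>l<p. gr_act (p * q) (l + j * p) z) = (\<Sum>t\<in>{j * p..<j * p + p}. gr_act (p * q) t z)"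
      using sum.shift_bounds_nat_ivl[of "\<lambda>t. gr_act (p * q) t z" 0 "j * p" p]
      by (simp add: atLeast0LessThan add.commute)
  qed
  also have "\<dots> = (\<Sum>t<q * p. gr_act (p * q) t z)"
    by (rule sum.nat_group)
  finally show ?thesis by (simp add: mult.commute)
qed

lemma gr_act_partial_orbit_scalar:
  "(\<Sum>l<k. gr_act n l (gr_smult c (gr_basis n 0))) = gr_smult c (gr_geom n k)"
proof -
  have "(\<Sum>l<k. gr_act n l (gr_smult c (gr_basis n 0))) = (\<Sum>l<k. gr_smult c (gr_basis n l))"
    by (simp only: gr_act_smult gr_act_basis add_0)
  then show ?thesis
    by (simp add: gr_geom_def gr_smult_def sum_fun_apply sum_distrib_left fun_eq_iff)
qed

section \<open>The coefficient ring K and the module Y_i\<close>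

definition is_subring :: "'f::field set \<Rightarrow> bool" where
  "is_subring K \<longleftrightarrow> 0 \<in> K \<and> 1 \<in> K \<and> -1 \<in> K \<and> (\<forall>a\<in>K. \<forall>b\<in>K. a + b \<in> K \<and> a * b \<in> K)"

lemma ring_copy_in_is_subring:
  assumes copy: "ring_copy_in R ad mu on K"
    and in_R: "z \<in> R" "on \<in> R" "ng \<in> R"
    and zero: "ad z z = z" and minus_one: "ad ng on = z"
    and closed: "\<And>x y. x \<in> R \<Longrightarrow> y \<in> R \<Longrightarrow> ad x y \<in> R \<and> mu x y \<in> R"
  shows "is_subring K"
proof -
  obtain \<phi> where img: "\<phi> ` R = K" and one: "\<phi> on = 1"
    and hom: "\<And>x y. x \<in> R \<Longrightarrow> y \<in> R \<Longrightarrow> \<phi> (ad x y) = \<phi> x + \<phi> y \<and> \<phi> (mu x y) = \<phi> x * \<phi> y"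
    using copy unfolding ring_copy_in_def by blast
  have "\<phi> z = \<phi> z + \<phi> z" using hom[OF in_R(1) in_R(1)] zero by simp
  then have "\<phi> z = 0" by (metis add_cancel_right_right)
  have "\<phi> ng = -1"
    using hom[OF in_R(3) in_R(2)] minus_one one \<open>\<phi> z = 0\<close> by (simp add: eq_neg_iff_add_eq_0)
  have in_K: "\<phi> x \<in> K" if "x \<in> R" for x using img that by blast
  have "a + b \<in> K \<and> a * b \<in> K" if ab: "a \<in> K" "b \<in> K" for a b
  proof -
    obtain x y where xy: "x \<in> R" "y \<in> R" and "a = \<phi> x" "b = \<phi> y" using img ab by blast
    then have "a + b = \<phi> (ad x y)" "a * b = \<phi> (mu x y)" using hom[OF xy] by simp_all
    then show ?thesis using closed[OF xy] in_K by simp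
  qed
  with in_K[OF in_R(1)] in_K[OF in_R(2)] in_K[OF in_R(3)] show ?thesis
    unfolding is_subring_def by (simp add: \<open>\<phi> z = 0\<close> \<open>\<phi> ng = -1\<close> one)
qed

lemma quotient_of_denom_dvd:
  assumes "quotient_of r = (a', b')" "r = of_int a / of_int b" "b \<noteq> 0"
  shows "b' dvd b"
proof -
  have "b' > 0" "coprime a' b'" "r = of_int a' / of_int b'"
    using assms(1) by (simp_all add: quotient_of_denom_pos quotient_of_coprime quotient_of_div)
  then have "(of_int a' :: rat) * of_int b = of_int a * of_int b'"
    using assms(2,3) by (simp add: frac_eq_eq)
  then have "a' * b = a * b'" by (metis of_int_eq_iff of_int_mult)
  then have "b' dvd a' * b" by (metis dvd_triv_right)
  with \<open>coprime a' b'\<close> show ?thesis by (metis coprime_commute coprime_dvd_mult_right_iff)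
qed

lemma Zloc_iff: "r \<in> Zloc p \<longleftrightarrow> (\<exists>a b. b \<noteq> 0 \<and> \<not> int p dvd b \<and> r = of_int a / of_int b)"
proof
  assume "r \<in> Zloc p"
  then show "\<exists>a b. b \<noteq> 0 \<and> \<not> int p dvd b \<and> r = of_int a / of_int b"
    unfolding Zloc_def
    by (metis (mono_tags, lifting) mem_Collect_eq prod.collapse quotient_of_denom_pos' quotient_of_div less_irrefl)
next
  assume "\<exists>a b. b \<noteq> 0 \<and> \<not> int p dvd b \<and> r = of_int a / of_int b"
  then obtain a b where ab: "b \<noteq> 0" "\<not> int p dvd b" "r = of_int a / of_int b" by blast
  obtain a' b' where q: "quotient_of r = (a', b')" by (cases "quotient_of r")
  have "b' dvd b" using quotient_of_denom_dvd[OF q ab(3) ab(1)] .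
  then have "\<not> int p dvd b'" using ab(2) dvd_trans by blast
  then show "r \<in> Zloc p" unfolding Zloc_def using q by simp
qed

lemma is_subring_Zloc:
  assumes "prime p" "is_Zloc_in p K"
  shows "is_subring K"
proof -
  have p: "prime (int p)" using assms(1) by simp
  have "\<not> int p dvd 1" using p not_prime_unit by blast
  then have int_in: "of_int a \<in> Zloc p" for a
    unfolding Zloc_iff by (intro exI[of _ a] exI[of _ 1]) simp
  have closed: "x + y \<in> Zloc p \<and> x * y \<in> Zloc p" if xy: "x \<in> Zloc p" "y \<in> Zloc p" for x y
  proof -
    obtain a b where ab: "b \<noteq> 0" "\<not> int p dvd b" "x = of_int a / of_int b"
      using xy(1) Zloc_iff by blast
    obtain c d where cd: "d \<noteq> 0" "\<not> int p dvd d" "y = of_int c / of_int d"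
      using xy(2) Zloc_iff by blast
    have "b * d \<noteq> 0" "\<not> int p dvd b * d" using ab cd p by (simp_all add: prime_dvd_mult_iff)
    moreover have "x + y = of_int (a * d + c * b) / of_int (b * d)" "x * y = of_int (a * c) / of_int (b * d)"
      using ab cd by (simp_all add: add_frac_eq)
    ultimately show ?thesis unfolding Zloc_iff by blast
  qed
  have zero: "0 \<in> Zloc p" and one: "1 \<in> Zloc p" and minus_one: "-1 \<in> Zloc p"
    using int_in[of 0] int_in[of 1] int_in[of "-1"] by simp_all
  have "(0::rat) + 0 = 0" "-1 + (1::rat) = 0" by simp_all
  with assms(2) zero one minus_one show ?thesis
    unfolding is_Zloc_in_def using closed by (rule ring_copy_in_is_subring)
qed

lemma is_subring_Zp:
  assumes "prime p" "is_Zp_in p K"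
  shows "is_subring K"
proof -
  have pow_pos: "(0::int) < int p ^ n" for n using assms(1) prime_gt_0_nat by simp
  have pow_dvd: "int p ^ n dvd int p ^ Suc n" for n by simp
  have zero: "(\<lambda>n. 0) \<in> Zp_carrier p" unfolding Zp_carrier_def using pow_pos by simp
  have one: "Zp_one p \<in> Zp_carrier p" unfolding Zp_carrier_def Zp_one_def using pow_pos pow_dvd
    by (auto simp: mod_mod_cancel)
  have "(int p ^ Suc n - 1) mod int p ^ n = int p ^ n - 1" for n
  proof -
    have "(int p ^ Suc n - 1) mod int p ^ n = (- 1) mod int p ^ n"
      by (simp add: mod_diff_left_eq[symmetric])
    also have "\<dots> = int p ^ n - 1" using pow_pos[of n] by (simp add: zmod_minus1)
    finally show ?thesis .
  qed
  then have minus_one: "(\<lambda>n. int p ^ n - 1) \<in> Zp_carrier p" unfolding Zp_carrier_def using pow_pos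
    by (auto simp: int_one_le_iff_zero_less)
  have closed: "Zp_add p x y \<in> Zp_carrier p \<and> Zp_mult p x y \<in> Zp_carrier p"
    if "x \<in> Zp_carrier p" "y \<in> Zp_carrier p" for x y
  proof -
    have coh: "x (Suc n) mod int p ^ n = x n" "y (Suc n) mod int p ^ n = y n" for n
      using that unfolding Zp_carrier_def by auto
    have "(x (Suc n) + y (Suc n)) mod int p ^ Suc n mod int p ^ n = (x n + y n) mod int p ^ n" for n
      by (simp only: mod_mod_cancel[OF pow_dvd] mod_add_eq[of "x (Suc n)" "int p ^ n" "y (Suc n)", symmetric] coh)
    moreover have "(x (Suc n) * y (Suc n)) mod int p ^ Suc n mod int p ^ n = (x n * y n) mod int p ^ n" for n
      by (simp only: mod_mod_cancel[OF pow_dvd] mod_mult_eq[of "x (Suc n)" "int p ^ n" "y (Suc n)", symmetric] coh)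
    ultimately show ?thesis unfolding Zp_carrier_def Zp_add_def Zp_mult_def using pow_pos by simp
  qed
  have zero_add: "Zp_add p (\<lambda>n. 0) (\<lambda>n. 0) = (\<lambda>n. 0)"
    and minus_one_add: "Zp_add p (\<lambda>n. int p ^ n - 1) (Zp_one p) = (\<lambda>n. 0)"
    unfolding Zp_add_def Zp_one_def by (simp_all add: mod_add_right_eq)
  show ?thesis
    using assms(2) zero one minus_one zero_add minus_one_add closed
    unfolding is_Zp_in_def by (rule ring_copy_in_is_subring)
qed

lemma is_subring_uminus: "is_subring K \<Longrightarrow> a \<in> K \<Longrightarrow> - a \<in> K"
  unfolding is_subring_def by (metis mult_minus1)

lemma is_subring_sum: "is_subring K \<Longrightarrow> (\<And>i. i \<in> A \<Longrightarrow> f i \<in> K) \<Longrightarrow> sum f A \<in> K"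
  by (induction A rule: infinite_finite_induct) (auto simp: is_subring_def)

lemma KG_zero: "is_subring K \<Longrightarrow> 0 \<in> KG n K"
  by (simp add: KG_def gr_elems_def is_subring_def)

lemma KG_add: "is_subring K \<Longrightarrow> u \<in> KG n K \<Longrightarrow> v \<in> KG n K \<Longrightarrow> u + v \<in> KG n K"
  by (simp add: KG_def gr_elems_def is_subring_def)

lemma KG_uminus: "is_subring K \<Longrightarrow> u \<in> KG n K \<Longrightarrow> - u \<in> KG n K"
  by (simp add: KG_def gr_elems_def is_subring_uminus)

lemma KG_diff: "is_subring K \<Longrightarrow> u \<in> KG n K \<Longrightarrow> v \<in> KG n K \<Longrightarrow> u - v \<in> KG n K"
  using KG_add[of K u n "- v"] KG_uminus[of K v n] by simp

lemma KG_sum: "is_subring K \<Longrightarrow> (\<And>i. i \<in> A \<Longrightarrow> f i \<in> KG n K) \<Longrightarrow> sum f A \<in> KG n K"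
  by (induction A rule: infinite_finite_induct) (auto simp: KG_zero KG_add)

lemma KG_basis: "is_subring K \<Longrightarrow> gr_basis n k \<in> KG n K"
  by (simp add: KG_def gr_elems_def gr_basis_def is_subring_def)

lemma KG_smult_basis: "is_subring K \<Longrightarrow> c \<in> K \<Longrightarrow> gr_smult c (gr_basis n k) \<in> KG n K"
  by (simp add: KG_def gr_elems_def gr_basis_def gr_smult_def is_subring_def)

lemma KG_mult: "is_subring K \<Longrightarrow> u \<in> KG n K \<Longrightarrow> v \<in> KG n K \<Longrightarrow> gr_mult n u v \<in> KG n K"
  unfolding KG_def gr_elems_def gr_mult_def
  by (auto intro!: is_subring_sum) (auto simp: is_subring_def)

lemma KG_pow: "is_subring K \<Longrightarrow> u \<in> KG n K \<Longrightarrow> gr_pow n u i \<in> KG n K"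
  unfolding gr_pow_def by (induction i) (auto simp: KG_basis KG_mult)

lemma gr_mult_add_left: "gr_mult n (u + v) y = gr_mult n u y + gr_mult n v y"
  unfolding gr_mult_def
  by (rule ext) (simp add: sum.distrib[symmetric] distrib_right if_distrib cong: if_cong)

lemma gr_mult_uminus_left: "gr_mult n (- u) y = - gr_mult n u y"
  unfolding gr_mult_def
  by (rule ext) (simp add: sum_negf[symmetric] if_distrib cong: if_cong)

lemma gr_mult_zero_left: "gr_mult n 0 y = 0"
  unfolding gr_mult_def by (rule ext) (simp cong: if_cong)

lemma gr_mult_scalar_left:
  assumes "y \<in> gr_elems n"
  shows "gr_mult n (gr_smult c (gr_basis n 0)) y = gr_smult c y"
proof (rule ext)
  fix j
  show "gr_mult n (gr_smult c (gr_basis n 0)) y j = gr_smult c y j"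
  proof (cases "j < n")
    case True
    have "gr_mult n (gr_smult c (gr_basis n 0)) y j
        = (\<Sum>u<n. if u = 0 then (\<Sum>v<n. if v = j then c * y v else 0) else 0)"
      unfolding gr_mult_def gr_smult_def gr_basis_def if_P[OF True]
      by (intro sum.cong refl) (auto intro!: sum.neutral sum.cong)
    then show ?thesis using True by (simp add: gr_smult_def)
  qed (use assms in \<open>simp add: gr_mult_def gr_smult_def gr_elems_def\<close>)
qed

abbreviation a_minus_1_pow :: "nat \<Rightarrow> nat \<Rightarrow> (nat \<Rightarrow> 'f::field)" where
  "a_minus_1_pow p i \<equiv> gr_pow (p^2) (gr_basis (p^2) 1 - gr_basis (p^2) 0) i"

lemma Ymod_subset_KG:
  assumes "is_subring K"
  shows "Ymod p K i \<subseteq> KG (p^2) K"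
proof
  fix x assume "x \<in> Ymod p K i"
  then obtain u v where uv: "u \<in> KG (p^2) K" "v \<in> KG (p^2) K"
    and x: "x = gr_mult (p^2) u (PhiA p) + gr_mult (p^2) v (a_minus_1_pow p i)"
    unfolding Ymod_def by blast
  have "PhiA p \<in> KG (p^2) K" unfolding PhiA_def using assms by (intro KG_sum KG_basis)
  moreover have "a_minus_1_pow p i \<in> KG (p^2) K" using assms by (intro KG_pow KG_diff KG_basis)
  ultimately show "x \<in> KG (p^2) K" unfolding x using uv assms by (simp add: KG_add KG_mult)
qed

lemma Ymod_zero: "is_subring K \<Longrightarrow> 0 \<in> Ymod p K i"
  unfolding Ymod_def using KG_zero[of K "p^2"] by (force simp: gr_mult_zero_left)

lemma Ymod_add:
  assumes K: "is_subring K" and "x \<in> Ymod p K i" "y \<in> Ymod p K i"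
  shows "x + y \<in> Ymod p K i"
proof -
  obtain u v where uv: "u \<in> KG (p^2) K" "v \<in> KG (p^2) K"
    and x: "x = gr_mult (p^2) u (PhiA p) + gr_mult (p^2) v (a_minus_1_pow p i)"
    using assms(2) unfolding Ymod_def by blast
  obtain u' v' where uv': "u' \<in> KG (p^2) K" "v' \<in> KG (p^2) K"
    and y: "y = gr_mult (p^2) u' (PhiA p) + gr_mult (p^2) v' (a_minus_1_pow p i)"
    using assms(3) unfolding Ymod_def by blast
  have "x + y = gr_mult (p^2) (u + u') (PhiA p) + gr_mult (p^2) (v + v') (a_minus_1_pow p i)"
    unfolding x y by (simp add: gr_mult_add_left algebra_simps)
  moreover have "u + u' \<in> KG (p^2) K" "v + v' \<in> KG (p^2) K" using K uv uv' by (simp_all add: KG_add)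
  ultimately show ?thesis unfolding Ymod_def by blast
qed

lemma Ymod_uminus:
  assumes K: "is_subring K" and "x \<in> Ymod p K i"
  shows "- x \<in> Ymod p K i"
proof -
  obtain u v where uv: "u \<in> KG (p^2) K" "v \<in> KG (p^2) K"
    and x: "x = gr_mult (p^2) u (PhiA p) + gr_mult (p^2) v (a_minus_1_pow p i)"
    using assms(2) unfolding Ymod_def by blast
  have "- x = gr_mult (p^2) (- u) (PhiA p) + gr_mult (p^2) (- v) (a_minus_1_pow p i)"
    unfolding x by (simp add: gr_mult_uminus_left)
  moreover have "- u \<in> KG (p^2) K" "- v \<in> KG (p^2) K" using K uv by (simp_all add: KG_uminus)
  ultimately show ?thesis unfolding Ymod_def by blast
qed

lemma PhiA_eq_gr_geom: "PhiA p = gr_geom (p^2) p"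
  by (simp add: PhiA_def gr_geom_def)

lemma Ymod_smult_PhiA:
  assumes "is_subring K" "c \<in> K"
  shows "gr_smult c (PhiA p) \<in> Ymod p K i"
proof -
  have PhiA: "PhiA p \<in> gr_elems (p^2)"
    unfolding PhiA_eq_gr_geom by (rule gr_geom_in_gr_elems)
  have "gr_smult c (PhiA p)
      = gr_mult (p^2) (gr_smult c (gr_basis (p^2) 0)) (PhiA p) + gr_mult (p^2) 0 (a_minus_1_pow p i)"
    by (simp add: gr_mult_scalar_left[OF PhiA] gr_mult_zero_left)
  moreover have "gr_smult c (gr_basis (p^2) 0) \<in> KG (p^2) K" "0 \<in> KG (p^2) K"
    using assms by (simp_all add: KG_smult_basis KG_zero)
  ultimately show ?thesis unfolding Ymod_def by blast
qed

section \<open>Crystallographic groups of C_n\<close>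

interpretation gr: Modules.module gr_smult
  by unfold_locales (simp_all add: gr_smult_def fun_eq_iff algebra_simps)

lemma Fspan_eq_span: "Fspan M = gr.span M"
  unfolding Fspan_def gr.span_explicit by blast

lemma subspace_gr_elems: "gr.subspace (gr_elems n)"
  by (simp add: gr.subspace_def gr_elems_def gr_smult_def)

locale crys_setting =
  fixes n :: nat and M :: "(nat \<Rightarrow> 'f::field) set" and T :: "nat \<Rightarrow> (nat \<Rightarrow> 'f) set"
  assumes n_pos: "0 < n"
    and zero_in_M: "0 \<in> M"
    and add_in_M: "\<And>a b. a \<in> M \<Longrightarrow> b \<in> M \<Longrightarrow> a + b \<in> M"
    and uminus_in_M: "\<And>a. a \<in> M \<Longrightarrow> - a \<in> M"
    and M_subset: "M \<subseteq> gr_elems n"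
    and cocycle: "is_cocycle n M T"
begin

lemma diff_in_M: "a \<in> M \<Longrightarrow> b \<in> M \<Longrightarrow> a - b \<in> M"
  using add_in_M[of a "- b"] uminus_in_M[of b] by simp

lemma coset_add_M:
  assumes "d \<in> M"
  shows "coset M (y + d) = coset M y"
  unfolding coset_def
proof (intro equalityI image_subsetI)
  fix m assume "m \<in> M"
  show "y + d + m \<in> (\<lambda>m. y + m) ` M"
    using add_in_M[OF assms \<open>m \<in> M\<close>] by (intro rev_image_eqI[of "d + m"]) (simp_all add: add.assoc)
  show "y + m \<in> (\<lambda>m. y + d + m) ` M"
    using diff_in_M[OF \<open>m \<in> M\<close> assms] by (intro rev_image_eqI[of "m - d"]) simp_all
qed

lemma coset_zero: "coset M 0 = M"
  by (simp add: coset_def)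

lemma self_in_coset: "x \<in> coset M x"
  unfolding coset_def using zero_in_M by (intro rev_image_eqI[of 0]) simp_all

lemma Fspan_subset: "Fspan M \<subseteq> gr_elems n"
  unfolding Fspan_eq_span by (rule gr.span_minimal[OF M_subset subspace_gr_elems])

lemma mem_T_iff: "g < n \<Longrightarrow> x \<in> T g \<longleftrightarrow> x \<in> Fspan M \<and> coset M x = T g"
proof
  assume "g < n" "x \<in> T g"
  obtain y where y: "y \<in> Fspan M" "T g = coset M y"
    using cocycle \<open>g < n\<close> unfolding is_cocycle_def Mhat_def by blast
  then obtain m where m: "m \<in> M" "x = y + m" using \<open>x \<in> T g\<close> unfolding coset_def by blast
  then have "x \<in> Fspan M" using y(1) unfolding Fspan_eq_span by (simp add: gr.span_add gr.span_base)
  then show "x \<in> Fspan M \<and> coset M x = T g" using y(2) m coset_add_M by simp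
qed (use self_in_coset in auto)

lemma T_nonempty: "g < n \<Longrightarrow> \<exists>x. x \<in> T g"
  using cocycle self_in_coset unfolding is_cocycle_def Mhat_def by blast

lemma T_subset: "g < n \<Longrightarrow> x \<in> T g \<Longrightarrow> x \<in> gr_elems n"
  using mem_T_iff Fspan_subset by blast

lemma T_add_M: "g < n \<Longrightarrow> x \<in> T g \<Longrightarrow> d \<in> M \<Longrightarrow> x + d \<in> T g"
  using mem_T_iff coset_add_M self_in_coset by metis

lemma T_diff: "g < n \<Longrightarrow> x \<in> T g \<Longrightarrow> x' \<in> T g \<Longrightarrow> x' - x \<in> M"
  using mem_T_iff[of g x] unfolding coset_def by force

lemma T_cocycle:
  "g < n \<Longrightarrow> h < n \<Longrightarrow> x \<in> T h \<Longrightarrow> z \<in> T g \<Longrightarrow> gr_act n g x + z \<in> T ((g + h) mod n)"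
  using cocycle unfolding is_cocycle_def by blast

lemma T_zero: "T 0 = M"
proof -
  obtain y where y: "y \<in> T 0" using T_nonempty n_pos by blast
  have "gr_act n 0 y + y \<in> T 0" using T_cocycle[OF n_pos n_pos y y] by simp
  then have "y + y \<in> T 0" using gr_act_zero_left T_subset n_pos y by metis
  then have "(y + y) - y \<in> M" using T_diff[OF n_pos y] by blast
  then have "y \<in> M" by simp
  then show ?thesis
    using mem_T_iff[OF n_pos] y coset_add_M[of y 0] coset_zero by simp
qed

lemma carrier_Crys: "(g, x) \<in> carrier (Crys n M T) \<longleftrightarrow> g < n \<and> x \<in> T g"
  using mem_T_iff by (auto simp: Crys_def)

lemma mult_Crys: "(g, x) \<otimes>\<^bsub>Crys n M T\<^esub> (g', x') = ((g + g') mod n, gr_act n g' x + x')"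
  by (simp add: Crys_def)

lemma one_Crys: "\<one>\<^bsub>Crys n M T\<^esub> = (0, 0)"
  by (simp add: Crys_def)

lemma T_inverse:
  assumes "g < n" "x \<in> T g"
  shows "- gr_act n ((n - g) mod n) x \<in> T ((n - g) mod n)"
proof -
  define k where "k = (n - g) mod n"
  have k: "k < n" "(k + g) mod n = 0" using assms(1) n_pos by (simp_all add: k_def mod_add_left_eq)
  obtain z where z: "z \<in> T k" using T_nonempty k(1) by blast
  have "gr_act n k x + z \<in> M" using T_cocycle[OF k(1) assms z] k(2) T_zero by simp
  from T_add_M[OF k(1) z uminus_in_M[OF this]] show ?thesis by (simp add: k_def)
qed

lemma group_Crys: "group (Crys n M T)"
proof (rule groupI)
  fix a b assume "a \<in> carrier (Crys n M T)" "b \<in> carrier (Crys n M T)"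
  then obtain g x g' x' where "a = (g, x)" "b = (g', x')" "g < n" "x \<in> T g" "g' < n" "x' \<in> T g'"
    by (cases a, cases b) (simp add: carrier_Crys)
  moreover have "gr_act n g' x + x' \<in> T ((g' + g) mod n)"
    using T_cocycle calculation(3-6) by blast
  ultimately show "a \<otimes>\<^bsub>Crys n M T\<^esub> b \<in> carrier (Crys n M T)"
    by (simp add: carrier_Crys mult_Crys add.commute)
next
  show "\<one>\<^bsub>Crys n M T\<^esub> \<in> carrier (Crys n M T)"
    using n_pos T_zero zero_in_M by (simp add: one_Crys carrier_Crys)
next
  fix a b c :: "nat \<times> (nat \<Rightarrow> 'f)"
  show "a \<otimes>\<^bsub>Crys n M T\<^esub> b \<otimes>\<^bsub>Crys n M T\<^esub> c = a \<otimes>\<^bsub>Crys n M T\<^esub> (b \<otimes>\<^bsub>Crys n M T\<^esub> c)"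
    by (cases a, cases b, cases c)
      (simp add: mult_Crys gr_act_add gr_act_gr_act gr_act_mod mod_simps add.assoc)
next
  fix a assume "a \<in> carrier (Crys n M T)"
  then show "\<one>\<^bsub>Crys n M T\<^esub> \<otimes>\<^bsub>Crys n M T\<^esub> a = a"
    by (cases a) (simp add: one_Crys mult_Crys carrier_Crys gr_act_zero)
next
  fix a assume "a \<in> carrier (Crys n M T)"
  then obtain g x where a: "a = (g, x)" "g < n" "x \<in> T g" by (cases a) (simp add: carrier_Crys)
  define k where "k = (n - g) mod n"
  have k: "k < n" "(k + g) mod n = 0" using a(2) n_pos by (simp_all add: k_def mod_add_left_eq)
  have "(k, - gr_act n k x) \<otimes>\<^bsub>Crys n M T\<^esub> a = \<one>\<^bsub>Crys n M T\<^esub>"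
    using k T_subset[OF a(2,3)] gr_act_gr_act[of n g k x] gr_act_mod[of n "k + g" x]
    by (simp add: a(1) mult_Crys one_Crys gr_act_uminus gr_act_zero_left)
  moreover have "(k, - gr_act n k x) \<in> carrier (Crys n M T)"
    using T_inverse[OF a(2,3)] k by (simp add: carrier_Crys k_def)
  ultimately show "\<exists>y\<in>carrier (Crys n M T). y \<otimes>\<^bsub>Crys n M T\<^esub> a = \<one>\<^bsub>Crys n M T\<^esub>" by blast
qed

lemma pow_Crys:
  assumes "x \<in> gr_elems n"
  shows "(g, x) [^]\<^bsub>Crys n M T\<^esub> k = ((k * g) mod n, \<Sum>j<k. gr_act n (j * g) x)"
proof (induction k)
  case 0
  then show ?case by (simp add: one_Crys zero_fun_def)
next
  case (Suc k)
  have "(g, x) [^]\<^bsub>Crys n M T\<^esub> Suc k = ((k * g) mod n, \<Sum>j<k. gr_act n (j * g) x) \<otimes>\<^bsub>Crys n M T\<^esub> (g, x)"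
    using Suc by simp
  also have "\<dots> = (((k * g) mod n + g) mod n, gr_act n g (\<Sum>j<k. gr_act n (j * g) x) + x)"
    by (rule mult_Crys)
  also have "((k * g) mod n + g) mod n = (Suc k * g) mod n"
    by (simp add: mod_simps add.commute)
  also have "gr_act n g (\<Sum>j<k. gr_act n (j * g) x) + x = (\<Sum>j<Suc k. gr_act n (j * g) x)"
    unfolding sum.lessThan_Suc_shift gr_act_sum
    by (simp add: gr_act_gr_act gr_act_zero_left[OF assms] add.commute)
  finally show ?case .
qed

lemma ord_Crys:
  assumes n: "n = p * q" and "0 < p" and c: "(p, x) \<in> carrier (Crys n M T)"
    and orbit_zero: "(\<Sum>j<q. gr_act n (j * p) x) = 0"
  shows "group.ord (Crys n M T) (p, x) = q"
proof -
  interpret Crys: group "Crys n M T" by (rule group_Crys)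
  have x: "x \<in> gr_elems n" using c T_subset unfolding carrier_Crys by blast
  have "(p, x) [^]\<^bsub>Crys n M T\<^esub> k = \<one>\<^bsub>Crys n M T\<^esub> \<longleftrightarrow> q dvd k" for k
  proof
    assume "(p, x) [^]\<^bsub>Crys n M T\<^esub> k = \<one>\<^bsub>Crys n M T\<^esub>"
    then have "(k * p) mod n = 0" by (simp add: pow_Crys[OF x] one_Crys)
    then have "p * q dvd k * p" using n by auto
    then show "q dvd k" using \<open>0 < p\<close> by (simp add: mult.commute)
  next
    assume "q dvd k"
    then obtain r where "k = q * r" by blast
    moreover have "(q * p) mod n = 0" using n by simp
    then have "(p, x) [^]\<^bsub>Crys n M T\<^esub> q = \<one>\<^bsub>Crys n M T\<^esub>"
      by (simp add: pow_Crys[OF x] one_Crys orbit_zero)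
    ultimately show "(p, x) [^]\<^bsub>Crys n M T\<^esub> k = \<one>\<^bsub>Crys n M T\<^esub>"
      using c by (simp add: Crys.nat_pow_pow[symmetric])
  qed
  then show ?thesis using Crys.ord_unique[OF c] by blast
qed

lemma orbit_partial_sum_in_T:
  assumes "1 < n" "w \<in> T 1"
  shows "(\<Sum>t<k. gr_act n t w) \<in> T (k mod n)"
proof (induction k)
  case 0
  then show ?case using T_zero zero_in_M by (simp add: zero_fun_def)
next
  case (Suc k)
  have "(\<Sum>t<Suc k. gr_act n t w) = gr_act n 1 (\<Sum>t<k. gr_act n t w) + w"
    unfolding sum.lessThan_Suc_shift gr_act_sum
    using gr_act_zero_left[OF T_subset[OF assms]] by (simp add: gr_act_gr_act add.commute)
  also have "\<dots> \<in> T ((1 + k mod n) mod n)"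
    using assms Suc n_pos by (intro T_cocycle) simp_all
  also have "(1 + k mod n) mod n = Suc k mod n"
    by (simp add: mod_simps)
  finally show ?case .
qed

theorem Crys_has_element_of_order:
  assumes n: "n = p * q" and "0 < p" "1 < q"
    and geom: "\<And>c. gr_smult c (gr_geom n n) \<in> M \<Longrightarrow> gr_smult c (gr_geom n p) \<in> M"
  shows "\<exists>z \<in> carrier (Crys n M T). group.ord (Crys n M T) z = q"
proof -
  have "p < n" using n \<open>0 < p\<close> \<open>1 < q\<close> by simp
  then have "1 < n" using \<open>0 < p\<close> by linarith
  obtain w where w: "w \<in> T 1" using T_nonempty \<open>1 < n\<close> by blast
  define c where "c = (\<Sum>s<n. w s)"
  define e where "e = gr_smult c (gr_basis n 0)"
  define x where "x = (\<Sum>l<p. gr_act n l (w - e))"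
  have "gr_smult c (gr_geom n n) \<in> M"
    using orbit_partial_sum_in_T[OF \<open>1 < n\<close> w, of n] T_zero by (simp add: gr_act_orbit_sum c_def)
  then have correction: "- gr_smult c (gr_geom n p) \<in> M" by (intro uminus_in_M geom)
  have partial: "(\<Sum>l<p. gr_act n l w) \<in> T p"
    using orbit_partial_sum_in_T[OF \<open>1 < n\<close> w, of p] \<open>p < n\<close> by simp
  have "x = (\<Sum>l<p. gr_act n l w) + - gr_smult c (gr_geom n p)"
    by (simp add: x_def e_def gr_act_diff sum_subtractf gr_act_partial_orbit_scalar)
  then have "x \<in> T p"
    using T_add_M[OF \<open>p < n\<close> partial correction] by simp
  then have carrier: "(p, x) \<in> carrier (Crys n M T)" using \<open>p < n\<close> by (simp add: carrier_Crys)
  have "(\<Sum>s<n. e s) = c"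
    using n_pos by (simp add: e_def gr_smult_def gr_basis_def sum_distrib_left[symmetric])
  then have "(\<Sum>s<n. (w - e) s) = 0" by (simp add: sum_subtractf c_def)
  then have "(\<Sum>j<q. gr_act n (j * p) x) = 0"
    using gr_act_sum_blocks[where p=p and q=q and z="w - e"] gr_act_orbit_sum[of n "w - e"] n
    by (simp add: x_def gr_smult_def fun_eq_iff)
  then show ?thesis using ord_Crys[OF n \<open>0 < p\<close> carrier] carrier by blast
qed

end

theorem lemma9:
  fixes p :: nat and i :: nat and K :: "'f::field set"
    and T :: "nat \<Rightarrow> (nat \<Rightarrow> 'f) set"
  assumes "prime p"
    and "is_Zloc_in p K \<or> is_Zp_in p K"
    and "i \<le> p - 1"
    and "is_cocycle (p^2) (Ymod p K i) T"
  shows "\<exists>c \<in> carrier (Crys (p^2) (Ymod p K i) T). group.ord (Crys (p^2) (Ymod p K i) T) c = p"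
proof -
  have K: "is_subring K" using assms(1,2) is_subring_Zloc is_subring_Zp by blast
  have "1 < p" using assms(1) prime_gt_1_nat by blast
  then have "0 < p" by simp
  interpret crys_setting "p^2" "Ymod p K i" T
  proof
    show "0 < p^2" using \<open>0 < p\<close> by simp
    show "Ymod p K i \<subseteq> gr_elems (p^2)" using Ymod_subset_KG[OF K] by (auto simp: KG_def)
  qed (simp_all add: K Ymod_zero Ymod_add Ymod_uminus assms(4))
  have "gr_smult c (gr_geom (p^2) p) \<in> Ymod p K i"
    if "gr_smult c (gr_geom (p^2) (p^2)) \<in> Ymod p K i" for c
  proof -
    have "gr_smult c (gr_geom (p^2) (p^2)) 0 \<in> K" using that Ymod_subset_KG[OF K] by (auto simp: KG_def)
    then have "c \<in> K" using \<open>0 < p\<close> by (simp add: gr_smult_def gr_geom_apply)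
    then show ?thesis using Ymod_smult_PhiA[OF K] by (simp add: PhiA_eq_gr_geom)
  qed
  from Crys_has_element_of_order[OF power2_eq_square \<open>0 < p\<close> \<open>1 < p\<close> this] show ?thesis .
qed

end
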